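(* Consider the zooming algorithm on an instance of the Lipschitz MAB problem. If phase $i$ is clean, then $\Delta(v)\le 4\,r_t(v)$ for every round $t$ of the phase and every strategy $v$ that is active at time $t$. Consequently $n_t(v)\le O(i)\,\Delta(v)^{-2}$ for such $v$ (absolute constant in $O(\cdot)$).
   Context: Lipschitz MAB problem on $(L,X)$ of diameter $\le1$: unknown $\mu:X\to[0,1]$ with $|\mu(x)-\mu(y)|\le L(x,y)$; playing $v$ yields an independent sample in $[0,1]$ of mean $\mu(v)$. $\mu^*=\sup_X\mu$ (not necessarily attained), $\Delta(v)=\mu^*-\mu(v)$. Zooming algorithm: phases $i=1,2,\dots$ of $2^i$ rounds; within phase $i$, $n_t(v)$ = number of plays of $v$ in this phase before round $t$, $\mu_t(v)$ = their average reward ($0$ if none), $r_t(v)=\sqrt{8i/(2+n_t(v))}$, $I_t(v)=\mu_t(v)+2r_t(v)$; at phase start nothing is active; $u$ is covered at $t$ if $u\in B(v,r_t(v))$ (open ball) for some active $v$; in each round, if some strategy is uncovered one such is activated, then an active strategy of maximal index is played (ties arbitrary). Phase $i$ is clean if $|\mu_t(v)-\mu(v)|\le r_t(v)$ for every strategy $v$ played at least once in the phase and every round $t$ of the phase. *)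

theory Defs
  imports Complex_Main
begin

definition lipschitz_instance :: "'a set \<Rightarrow> ('a \<Rightarrow> 'a \<Rightarrow> real) \<Rightarrow> ('a \<Rightarrow> real) \<Rightarrow> bool" where
  "lipschitz_instance X L mu \<longleftrightarrow>
     (\<forall>x\<in>X. \<forall>y\<in>X. 0 \<le> L x y \<and> (L x y = 0 \<longleftrightarrow> x = y) \<and> L x y = L y x \<and>
         (\<forall>z\<in>X. L x z \<le> L x y + L y z) \<and> L x y \<le> 1) \<and>
     (\<forall>x\<in>X. 0 \<le> mu x \<and> mu x \<le> 1) \<and>
     (\<forall>x\<in>X. \<forall>y\<in>X. \<bar>mu x - mu y\<bar> \<le> L x y)"

definition mu_star :: "'a set \<Rightarrow> ('a \<Rightarrow> real) \<Rightarrow> real" where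
  "mu_star X mu = (SUP x\<in>X. mu x)"

definition gap :: "'a set \<Rightarrow> ('a \<Rightarrow> real) \<Rightarrow> 'a \<Rightarrow> real" where
  "gap X mu v = mu_star X mu - mu v"

text \<open>A run of phase i: rounds are numbered 0,...,2^i-1 inside the phase.
  act t = strategy activated in round t (None if none), play t = strategy played in round t,
  rew t = reward observed in round t.\<close>

definition nplays :: "(nat \<Rightarrow> 'a) \<Rightarrow> nat \<Rightarrow> 'a \<Rightarrow> nat" where
  "nplays play t v = card {s. s < t \<and> play s = v}"

definition avg_rew :: "(nat \<Rightarrow> 'a) \<Rightarrow> (nat \<Rightarrow> real) \<Rightarrow> nat \<Rightarrow> 'a \<Rightarrow> real" where
  "avg_rew play rew t v =
     (if nplays play t v = 0 then 0
      else (\<Sum>s\<in>{s. s < t \<and> play s = v}. rew s) / real (nplays play t v))"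

definition conf_rad :: "nat \<Rightarrow> (nat \<Rightarrow> 'a) \<Rightarrow> nat \<Rightarrow> 'a \<Rightarrow> real" where
  "conf_rad i play t v = sqrt (8 * real i / (2 + real (nplays play t v)))"

definition zindex :: "nat \<Rightarrow> (nat \<Rightarrow> 'a) \<Rightarrow> (nat \<Rightarrow> real) \<Rightarrow> nat \<Rightarrow> 'a \<Rightarrow> real" where
  "zindex i play rew t v = avg_rew play rew t v + 2 * conf_rad i play t v"

text \<open>Strategies activated in rounds strictly before t (so active_set act (Suc t) is the set of
  strategies active in round t after that round's activation step).\<close>
definition active_set :: "(nat \<Rightarrow> 'a option) \<Rightarrow> nat \<Rightarrow> 'a set" where
  "active_set act t = {v. \<exists>s<t. act s = Some v}"

definition covered :: "('a \<Rightarrow> 'a \<Rightarrow> real) \<Rightarrow> nat \<Rightarrow> (nat \<Rightarrow> 'a option) \<Rightarrow> (nat \<Rightarrow> 'a) \<Rightarrow> nat \<Rightarrow> 'a \<Rightarrow> bool" where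
  "covered L i act play t u \<longleftrightarrow> (\<exists>v\<in>active_set act t. L v u < conf_rad i play t v)"

definition zooming_phase_run ::
  "'a set \<Rightarrow> ('a \<Rightarrow> 'a \<Rightarrow> real) \<Rightarrow> ('a \<Rightarrow> real) \<Rightarrow> nat \<Rightarrow>
   (nat \<Rightarrow> 'a option) \<Rightarrow> (nat \<Rightarrow> 'a) \<Rightarrow> (nat \<Rightarrow> real) \<Rightarrow> bool" where
  "zooming_phase_run X L mu i act play rew \<longleftrightarrow>
     1 \<le> i \<and> lipschitz_instance X L mu \<and>
     (\<forall>t < 2 ^ i.
        (if (\<exists>u\<in>X. \<not> covered L i act play t u)
         then (\<exists>u\<in>X. \<not> covered L i act play t u \<and> act t = Some u)
         else act t = None) \<and>
        play t \<in> active_set act (Suc t) \<and>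
        (\<forall>w\<in>active_set act (Suc t). zindex i play rew t w \<le> zindex i play rew t (play t)) \<and>
        0 \<le> rew t \<and> rew t \<le> 1)"

definition clean_phase :: "('a \<Rightarrow> real) \<Rightarrow> nat \<Rightarrow> (nat \<Rightarrow> 'a) \<Rightarrow> (nat \<Rightarrow> real) \<Rightarrow> bool" where
  "clean_phase mu i play rew \<longleftrightarrow>
     (\<forall>v t. t < 2 ^ i \<and> (\<exists>s < 2 ^ i. play s = v) \<longrightarrow>
        \<bar>avg_rew play rew t v - mu v\<bar> \<le> conf_rad i play t v)"

end

theory Submission
  imports Defs
begin

(* The central fact
   (lemma gap_le_3_conf_rad_when_played) is that a strategy v played in round s has
   gap v <= 3 r_s(v): either round s activated a fresh strategy u, whose index is at
   least 4 and beats v's index (so r_s(v) >= 1 >= gap v), or every strategy x is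
   covered by some active w, and cleanness gives
     mu x <= I_s(w) <= I_s(v) <= mu v + 3 r_s(v).
   For an arbitrary round t and active v we then look at the last round s < t in which
   v was played: n_t(v) = n_s(v) + 1 and hence 3 r_s(v) <= 4 r_t(v); if v was never
   played, r_t(v) >= 2 >= gap v.  The counting bound n_t(v) <= 128 i / gap(v)^2 is
   pure algebra on r_t(v) = sqrt (8 i / (2 + n_t(v))). *)

lemma conf_rad_pos: "1 \<le> i \<Longrightarrow> 0 < conf_rad i play t v"
  unfolding conf_rad_def by simp

text \<open>Before the first play in a phase the radius is at least 2, so the index is at least 4.\<close>
lemma conf_rad_unplayed:
  assumes "1 \<le> i" "nplays play t v = 0"
  shows "2 \<le> conf_rad i play t v"
proof -
  have "(2::real)\<^sup>2 \<le> 8 * real i / (2 + real (nplays play t v))" using assms by simp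
  then show ?thesis unfolding conf_rad_def by (rule real_le_rsqrt)
qed

text \<open>One additional play shrinks the radius by a factor of at most 3/4.\<close>
lemma sqrt_one_more_sample:
  fixes c n :: real
  assumes "0 \<le> c" "0 \<le> n"
  shows "3 * sqrt (c / (2 + n)) \<le> 4 * sqrt (c / (3 + n))"
proof -
  have "9 * (c / (2 + n)) \<le> 16 * (c / (3 + n))"
    using assms by (simp add: field_simps)
  then have "sqrt (9 * (c / (2 + n))) \<le> sqrt (16 * (c / (3 + n)))"
    by (rule real_sqrt_le_mono)
  then have "sqrt 9 * sqrt (c / (2 + n)) \<le> sqrt 16 * sqrt (c / (3 + n))"
    by (simp only: real_sqrt_mult)
  moreover have "sqrt 9 = (3::real)" "sqrt 16 = (4::real)"
    using real_sqrt_abs[of 3] real_sqrt_abs[of 4] by simp_all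
  ultimately show ?thesis by simp
qed

lemma conf_rad_one_more_play:
  assumes "nplays play t v = Suc (nplays play s v)"
  shows "3 * conf_rad i play s v \<le> 4 * conf_rad i play t v"
  using sqrt_one_more_sample[of "8 * real i" "real (nplays play s v)"] assms
  unfolding conf_rad_def by (simp add: add.commute add.left_commute)

lemma last_play:
  assumes "nplays play t v \<noteq> 0"
  obtains s where "s < t" "play s = v" "nplays play t v = Suc (nplays play s v)"
proof -
  define S where "S = {s. s < t \<and> play s = v}"
  have "finite S" "S \<noteq> {}" using assms unfolding S_def nplays_def by auto
  define s where "s = Max S"
  have "s \<in> S" unfolding s_def using \<open>finite S\<close> \<open>S \<noteq> {}\<close> by simp
  then have s: "s < t" "play s = v" unfolding S_def by auto
  have "\<And>s'. s' \<in> S \<Longrightarrow> s' \<le> s" unfolding s_def using \<open>finite S\<close> by simp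
  then have "S = insert s {s'. s' < s \<and> play s' = v}"
    using s unfolding S_def by (auto simp: le_less)
  then have "nplays play t v = Suc (nplays play s v)"
    unfolding nplays_def S_def[symmetric] by simp
  with s that show ?thesis by blast
qed

lemma run_activation:
  assumes "zooming_phase_run X L mu i act play rew" "t < 2 ^ i"
  shows "if (\<exists>u\<in>X. \<not> covered L i act play t u)
         then (\<exists>u\<in>X. \<not> covered L i act play t u \<and> act t = Some u)
         else act t = None"
  using assms unfolding zooming_phase_run_def by auto

lemma run_play_active:
  assumes "zooming_phase_run X L mu i act play rew" "t < 2 ^ i"
  shows "play t \<in> active_set act (Suc t)"
  using assms unfolding zooming_phase_run_def by auto

lemma run_play_max_index:
  assumes "zooming_phase_run X L mu i act play rew" "t < 2 ^ i" "w \<in> active_set act (Suc t)"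
  shows "zindex i play rew t w \<le> zindex i play rew t (play t)"
  using assms unfolding zooming_phase_run_def by auto

lemma run_phase_pos: "zooming_phase_run X L mu i act play rew \<Longrightarrow> 1 \<le> i"
  unfolding zooming_phase_run_def by simp

lemma run_lipschitz: "zooming_phase_run X L mu i act play rew \<Longrightarrow> lipschitz_instance X L mu"
  unfolding zooming_phase_run_def by simp

lemma active_set_mono: "s \<le> t \<Longrightarrow> active_set act s \<subseteq> active_set act t"
  unfolding active_set_def by (auto intro: less_le_trans)

lemma active_in_X:
  assumes "zooming_phase_run X L mu i act play rew" "w \<in> active_set act T" "T \<le> 2 ^ i"
  shows "w \<in> X"
proof -
  obtain s where "s < T" "act s = Some w" using assms(2) unfolding active_set_def by auto
  with run_activation[OF assms(1), of s] assms(3) show ?thesis by (auto split: if_splits)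
qed

lemma gap_le_1:
  assumes "lipschitz_instance X L mu" "v \<in> X"
  shows "gap X mu v \<le> 1"
proof -
  have mu01: "\<And>x. x \<in> X \<Longrightarrow> 0 \<le> mu x \<and> mu x \<le> 1"
    using assms(1) unfolding lipschitz_instance_def by auto
  have "mu_star X mu \<le> 1"
    unfolding mu_star_def using assms(2) mu01 by (intro cSUP_least) auto
  then show ?thesis unfolding gap_def using mu01[OF assms(2)] by simp
qed

text \<open>A strategy activated in round s has not been played before round s: otherwise it
  would already be active and would cover itself.\<close>
lemma activated_unplayed:
  assumes run: "zooming_phase_run X L mu i act play rew" and s: "s < 2 ^ i"
    and u: "u \<in> X" "\<not> covered L i act play s u"
  shows "nplays play s u = 0"
proof (rule ccontr)
  assume "nplays play s u \<noteq> 0"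
  then obtain s' where s': "s' < s" "play s' = u" by (rule last_play)
  have "u \<in> active_set act (Suc s')" using run_play_active[OF run, of s'] s' s by simp
  moreover have "active_set act (Suc s') \<subseteq> active_set act s"
    using s' by (intro active_set_mono) simp
  ultimately have "u \<in> active_set act s" by blast
  moreover have "L u u = 0" using u(1) run_lipschitz[OF run] unfolding lipschitz_instance_def by auto
  ultimately have "covered L i act play s u"
    unfolding covered_def using conf_rad_pos[OF run_phase_pos[OF run], of play s u] by (intro bexI[of _ u]) simp_all
  with u(2) show False by simp
qed

text \<open>The average reward is never below mu - r: in a clean phase by definition for played
  strategies, and trivially for never-played ones, whose radius is at least 2.\<close>
lemma avg_rew_lower:
  assumes run: "zooming_phase_run X L mu i act play rew" and "clean_phase mu i play rew"
    and "w \<in> X" "s < 2 ^ i"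
  shows "mu w - conf_rad i play s w \<le> avg_rew play rew s w"
proof (cases "\<exists>s'<2 ^ i. play s' = w")
  case True
  then show ?thesis using assms(2,4) unfolding clean_phase_def by fastforce
next
  case False
  then have n0: "nplays play s w = 0" using assms(4) unfolding nplays_def by auto
  have "mu w \<le> 1" using run_lipschitz[OF run] assms(3) unfolding lipschitz_instance_def by auto
  then show ?thesis using conf_rad_unplayed[OF run_phase_pos[OF run] n0] n0
    unfolding avg_rew_def by simp
qed

lemma zindex_covers:
  assumes run: "zooming_phase_run X L mu i act play rew" and cl: "clean_phase mu i play rew"
    and "w \<in> X" "x \<in> X" "s < 2 ^ i" "L w x < conf_rad i play s w"
  shows "mu x \<le> zindex i play rew s w"
proof -
  have "\<bar>mu w - mu x\<bar> \<le> L w x"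
    using run_lipschitz[OF run] assms(3,4) unfolding lipschitz_instance_def by auto
  then show ?thesis using avg_rew_lower[OF run cl assms(3,5)] assms(6)
    unfolding zindex_def by linarith
qed

lemma zindex_upper:
  assumes "clean_phase mu i play rew" "s < 2 ^ i"
  shows "zindex i play rew s (play s) \<le> mu (play s) + 3 * conf_rad i play s (play s)"
  using assms unfolding clean_phase_def zindex_def by force

lemma gap_le_3_conf_rad_when_played:
  assumes run: "zooming_phase_run X L mu i act play rew" and cl: "clean_phase mu i play rew"
    and s: "s < 2 ^ i"
  shows "gap X mu (play s) \<le> 3 * conf_rad i play s (play s)"
proof -
  let ?v = "play s" and ?r = "conf_rad i play s (play s)"
  have vX: "?v \<in> X" using active_in_X[OF run run_play_active[OF run s]] s by simp
  have upper: "zindex i play rew s ?v \<le> mu ?v + 3 * ?r" using zindex_upper[OF cl s] .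
  show ?thesis
  proof (cases "\<exists>u\<in>X. \<not> covered L i act play s u")
    case True
    then obtain u where u: "u \<in> X" "\<not> covered L i act play s u" "act s = Some u"
      using run_activation[OF run s] by auto
    have n0: "nplays play s u = 0" using activated_unplayed[OF run s u(1,2)] .
    have "4 \<le> zindex i play rew s u"
      using conf_rad_unplayed[OF run_phase_pos[OF run] n0] n0
      unfolding zindex_def avg_rew_def by simp
    also have "\<dots> \<le> zindex i play rew s ?v"
      using run_play_max_index[OF run s] u(3) unfolding active_set_def by blast
    finally have "1 \<le> ?r"
      using upper run_lipschitz[OF run] vX unfolding lipschitz_instance_def by force
    then show ?thesis using gap_le_1[OF run_lipschitz[OF run] vX] by linarith
  next
    case False
    have "mu x \<le> mu ?v + 3 * ?r" if xX: "x \<in> X" for x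
    proof -
      obtain w where w: "w \<in> active_set act s" "L w x < conf_rad i play s w"
        using False xX unfolding covered_def by blast
      have "w \<in> X" using active_in_X[OF run w(1)] s by simp
      have "mu x \<le> zindex i play rew s w" using zindex_covers[OF run cl \<open>w \<in> X\<close> xX s w(2)] .
      also have "\<dots> \<le> zindex i play rew s ?v"
        using run_play_max_index[OF run s] active_set_mono[of s "Suc s" act] w(1) by auto
      finally show ?thesis using upper by linarith
    qed
    then have "mu_star X mu \<le> mu ?v + 3 * ?r"
      unfolding mu_star_def using vX by (intro cSUP_least) auto
    then show ?thesis unfolding gap_def by linarith
  qed
qed

lemma gap_le_4_conf_rad:
  assumes run: "zooming_phase_run X L mu i act play rew" and cl: "clean_phase mu i play rew"
    and t: "t < 2 ^ i" and v: "v \<in> active_set act (Suc t)"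
  shows "gap X mu v \<le> 4 * conf_rad i play t v"
proof (cases "nplays play t v = 0")
  case True
  have "gap X mu v \<le> 1" using gap_le_1[OF run_lipschitz[OF run] active_in_X[OF run v]] t by simp
  then show ?thesis using conf_rad_unplayed[OF run_phase_pos[OF run] True] by simp
next
  case False
  then obtain s where s: "s < t" "play s = v" "nplays play t v = Suc (nplays play s v)"
    by (rule last_play)
  have "gap X mu v \<le> 3 * conf_rad i play s v"
    using gap_le_3_conf_rad_when_played[OF run cl, of s] s t by simp
  also have "\<dots> \<le> 4 * conf_rad i play t v" using conf_rad_one_more_play[OF s(3)] .
  finally show ?thesis .
qed

lemma count_from_radius:
  fixes g n c :: real
  assumes "0 < g" "0 \<le> n" "0 \<le> c" "g \<le> 4 * sqrt (8 * c / (2 + n))"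
  shows "n \<le> 128 * c / g\<^sup>2"
proof -
  have "g\<^sup>2 \<le> (4 * sqrt (8 * c / (2 + n)))\<^sup>2"
    using assms by (intro power_mono) auto
  also have "\<dots> = 16 * (8 * c / (2 + n))"
    using assms by (simp add: power_mult_distrib)
  finally have "g\<^sup>2 * (2 + n) \<le> 128 * c" using assms(2) by (simp add: field_simps)
  moreover have "n * g\<^sup>2 \<le> g\<^sup>2 * (2 + n)" by (simp add: algebra_simps)
  ultimately have "n * g\<^sup>2 \<le> 128 * c" by linarith
  then show ?thesis using assms(1) by (simp add: field_simps)
qed

theorem mainTheorem9:
  shows "(\<forall>(X :: 'a set) L mu i act play rew t v.
            zooming_phase_run X L mu i act play rew \<and> clean_phase mu i play rew \<and>
            t < 2 ^ i \<and> v \<in> active_set act (Suc t) \<longrightarrow>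
            gap X mu v \<le> 4 * conf_rad i play t v)
       \<and> (\<exists>C :: real. \<forall>(X :: 'a set) L mu i act play rew t v.
            zooming_phase_run X L mu i act play rew \<and> clean_phase mu i play rew \<and>
            t < 2 ^ i \<and> v \<in> active_set act (Suc t) \<and> gap X mu v > 0 \<longrightarrow>
            real (nplays play t v) \<le> C * real i / (gap X mu v)\<^sup>2)"
proof (intro conjI exI[of _ 128] allI impI; elim conjE)
  fix X :: "'a set" and L mu i act play rew t v
  assume run: "zooming_phase_run X L mu i act play rew" and cl: "clean_phase mu i play rew"
    and t: "t < 2 ^ i" and v: "v \<in> active_set act (Suc t)"
  then show "gap X mu v \<le> 4 * conf_rad i play t v" by (rule gap_le_4_conf_rad)
  assume "gap X mu v > 0"
  then show "real (nplays play t v) \<le> 128 * real i / (gap X mu v)\<^sup>2"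
    using count_from_radius gap_le_4_conf_rad[OF run cl t v] unfolding conf_rad_def by simp
qed

end
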